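(* Let $\mathbb{X}\in\{\mathbb{H},\mathbb{E},\mathbb{S}\}$, $d\ge 2$, let $p,q,x\in\mathbb{X}^d$, let $pq$ be a shortest geodesic segment from $p$ to $q$, and let $y$ be the point of $pq$ closest to $x$. Let $\varepsilon\in(0,1]$. If $|xy|\le\sqrt{\varepsilon}\,\min\{|py|,|qy|\}$, then (i) if $\mathbb{X}\in\{\mathbb{E},\mathbb{S}\}$: $|px|+|xq|\le(1+\varepsilon)|pq|$; (ii) if $\mathbb{X}=\mathbb{H}$ and $|pq|\le\Delta$ for some $\Delta>0$: $|px|+|xq|\le(1+e^{\Delta}\varepsilon)|pq|$.
   Context: $\mathbb{E}^d$ is Euclidean $d$-space, $\mathbb{S}^d$ the unit sphere in $\mathbb{R}^{d+1}$ with geodesic (great-circle) metric, $\mathbb{H}^d$ hyperbolic $d$-space of curvature $-1$; $|ab|$ denotes the distance between $a$ and $b$ in the respective space. *)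

theory Defs
  imports "HOL-Analysis.Analysis"
begin

text \<open>Model spaces of dimension d = DIM('a).
  E^d is 'a itself with the Euclidean distance dist.
  S^d is the unit sphere of R^{d+1} = real \<times> 'a with the great-circle distance.
  H^d is the upper sheet of the hyperboloid t^2 - |v|^2 = 1 in real \<times> 'a
  (curvature -1), with distance arcosh of the Minkowski (Lorentzian) product.\<close>

definition sph_space :: "(real \<times> 'a::euclidean_space) set" where
  "sph_space = {z. norm z = 1}"

definition sph_dist :: "real \<times> 'a::euclidean_space \<Rightarrow> real \<times> 'a \<Rightarrow> real" where
  "sph_dist z w = arccos (z \<bullet> w)"

definition hyp_space :: "(real \<times> 'a::euclidean_space) set" where
  "hyp_space = {(t, v). t > 0 \<and> t\<^sup>2 - (norm v)\<^sup>2 = 1}"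

definition minkowski :: "real \<times> 'a::euclidean_space \<Rightarrow> real \<times> 'a \<Rightarrow> real" where
  "minkowski z w = fst z * fst w - snd z \<bullet> snd w"

definition hyp_dist :: "real \<times> 'a::euclidean_space \<Rightarrow> real \<times> 'a \<Rightarrow> real" where
  "hyp_dist z w = arcosh (minkowski z w)"

definition shortest_segment ::
  "('b \<Rightarrow> 'b \<Rightarrow> real) \<Rightarrow> 'b set \<Rightarrow> 'b \<Rightarrow> 'b \<Rightarrow> 'b set \<Rightarrow> bool" where
  "shortest_segment D X p q S \<longleftrightarrow>
     (\<exists>\<gamma>. (\<forall>t\<in>{0..1}. \<gamma> t \<in> X) \<and> \<gamma> 0 = p \<and> \<gamma> 1 = q \<and>
          (\<forall>s\<in>{0..1}. \<forall>t\<in>{0..1}. D (\<gamma> s) (\<gamma> t) = \<bar>s - t\<bar> * D p q) \<and>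
          S = \<gamma> ` {0..1})"

definition closest_in :: "('b \<Rightarrow> 'b \<Rightarrow> real) \<Rightarrow> 'b set \<Rightarrow> 'b \<Rightarrow> 'b \<Rightarrow> bool" where
  "closest_in D S x y \<longleftrightarrow> y \<in> S \<and> (\<forall>z\<in>S. D x y \<le> D x z)"

end

theory Submission
  imports Defs
begin

(* Let a = |py|, b = |qy| and h = |xy|. If y is an endpoint of pq, the hypothesis forces h = 0,
   i.e. x = y, and the claim is trivial. Otherwise y minimises the distance to x along both halves
   of pq, and the first-order condition at y says that xy makes a non-acute angle with both
   directions of pq at y; these being opposite, xy is perpendicular to pq. The Pythagorean
   theorem of the model space then gives |px|^2 = a^2 + h^2, cos |px| = cos a cos h, resp.
   cosh |px| = cosh a cosh h, and since h^2 <= eps a^2, elementary estimates bound |px| by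
   (1 + eps) a, resp. (1 + e^Delta eps) a (using cosh a <= e^Delta). Together with the same bound
   for |xq| and a + b = |pq| this is the claim. *)

section \<open>Shortest segments and closest points\<close>

lemma closest_in_mem: "closest_in D S x y \<Longrightarrow> y \<in> S"
  by (simp add: closest_in_def)

lemma shortest_segment_mem:
  assumes "shortest_segment D X p q S" "y \<in> S"
  shows "p \<in> X" "q \<in> X" "y \<in> X" "S \<subseteq> X"
proof -
  obtain \<gamma> where "\<forall>t\<in>{0..1}. \<gamma> t \<in> X" "\<gamma> 0 = p" "\<gamma> 1 = q"
    "\<forall>s\<in>{0..1}. \<forall>t\<in>{0..1}. D (\<gamma> s) (\<gamma> t) = \<bar>s - t\<bar> * D p q" "S = \<gamma> ` {0..1}"
    using assms(1) unfolding shortest_segment_def by blast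
  with assms(2) show "p \<in> X" "q \<in> X" "y \<in> X" "S \<subseteq> X"
    by auto
qed

lemma shortest_segment_reverse:
  assumes "shortest_segment D X p q S"
  shows "shortest_segment D X q p S"
proof -
  obtain \<gamma> where \<gamma>: "\<forall>t\<in>{0..1}. \<gamma> t \<in> X" "\<gamma> 0 = p" "\<gamma> 1 = q"
    "\<forall>s\<in>{0..1}. \<forall>t\<in>{0..1}. D (\<gamma> s) (\<gamma> t) = \<bar>s - t\<bar> * D p q" "S = \<gamma> ` {0..1}"
    using assms unfolding shortest_segment_def by blast
  have "D q p = D p q"
    using \<gamma>(4)[rule_format, of 1 0] \<gamma>(2,3) by simp
  moreover have "(\<lambda>t. \<gamma> (1 - t)) ` {0..1} = \<gamma> ` {0..1}"
    by (auto simp: image_iff intro!: bexI[where x = "1 - x" for x])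
  ultimately show ?thesis
    unfolding shortest_segment_def using \<gamma>
    by (intro exI[of _ "\<lambda>t. \<gamma> (1 - t)"]) (simp add: abs_minus_commute)
qed

lemma shortest_segment_split:
  assumes "shortest_segment D X p q S" "y \<in> S"
  shows "D p y + D y q = D p q"
proof -
  obtain \<gamma> t where \<gamma>: "\<gamma> 0 = p" "\<gamma> 1 = q" "t \<in> {0..1}" "y = \<gamma> t"
    and d: "\<forall>s\<in>{0..1}. \<forall>t\<in>{0..1}. D (\<gamma> s) (\<gamma> t) = \<bar>s - t\<bar> * D p q"
    using assms unfolding shortest_segment_def by blast
  have "D p y = \<bar>0 - t\<bar> * D p q" "D y q = \<bar>t - 1\<bar> * D p q"
    using d[rule_format, of 0 t] d[rule_format, of t 1] \<gamma> by auto
  then show ?thesis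
    using \<gamma>(3) by (simp add: algebra_simps)
qed

lemma shortest_segment_interpolate:
  assumes "shortest_segment D X p q S" "y \<in> S" "0 \<le> s" "s \<le> D p y"
  obtains z where "z \<in> S" "D y z = s" "D p z = D p y - s"
proof -
  obtain \<gamma> t where \<gamma>: "\<gamma> 0 = p" "t \<in> {0..1}" "y = \<gamma> t" "S = \<gamma> ` {0..1}"
    and d: "\<forall>s\<in>{0..1}. \<forall>t\<in>{0..1}. D (\<gamma> s) (\<gamma> t) = \<bar>s - t\<bar> * D p q"
    using assms(1,2) unfolding shortest_segment_def by blast
  show ?thesis
  proof (cases "s = 0")
    case True
    then show ?thesis
      using that[of y] assms(2) d \<gamma> by force
  next
    case False
    have "D p y = t * D p q"
      using d \<gamma> by force
    with assms(3,4) False \<gamma>(2) have "0 < t * D p q"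
      by auto
    with \<gamma>(2) have "0 < D p q"
      by (simp add: zero_less_mult_iff)
    define u where "u = t - s / D p q"
    have "0 \<le> s / D p q" "s / D p q \<le> t"
      using \<open>0 < D p q\<close> \<open>D p y = t * D p q\<close> assms(3,4) by (simp_all add: pos_divide_le_eq)
    with \<gamma>(2) have u: "u \<in> {0..1}"
      by (auto simp: u_def)
    have "D y (\<gamma> u) = \<bar>t - u\<bar> * D p q"
      using d \<gamma>(2,3) u by blast
    also have "\<dots> = s"
      using \<open>0 < D p q\<close> assms(3) by (simp add: u_def)
    finally have "D y (\<gamma> u) = s" .
    moreover have "D p (\<gamma> u) = \<bar>0 - u\<bar> * D p q"
      using d \<gamma>(1) u by force
    then have "D p (\<gamma> u) = D p y - s"
      using u \<open>0 < D p q\<close> \<open>D p y = t * D p q\<close> by (simp add: u_def algebra_simps)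
    ultimately show ?thesis
      using that u \<gamma>(4) by blast
  qed
qed

lemma detour_le_if_sides_le:
  fixes D :: "'b \<Rightarrow> 'b \<Rightarrow> real"
  assumes seg: "shortest_segment D X p q S" and y: "closest_in D S x y" and "x \<in> X"
    and sym: "\<And>u v. D u v = D v u"
    and metric: "\<And>u v. u \<in> X \<Longrightarrow> v \<in> X \<Longrightarrow> 0 \<le> D u v \<and> (D u v = 0 \<longleftrightarrow> u = v)"
    and "1 \<le> c" "0 \<le> \<epsilon>"
    and near: "D x y \<le> sqrt \<epsilon> * min (D p y) (D q y)"
    and sides: "\<lbrakk>0 < D p y; 0 < D q y; (D x y)\<^sup>2 \<le> \<epsilon> * (D p y)\<^sup>2; (D x y)\<^sup>2 \<le> \<epsilon> * (D q y)\<^sup>2\<rbrakk>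
      \<Longrightarrow> D p x \<le> c * D p y \<and> D q x \<le> c * D q y"
  shows "D p x + D x q \<le> c * D p q"
proof -
  note mem = shortest_segment_mem[OF seg closest_in_mem[OF y]]
  then have "0 \<le> D x y" "0 \<le> D p y" "0 \<le> D q y" and xy: "D x y = 0 \<longleftrightarrow> x = y"
    using metric \<open>x \<in> X\<close> by simp_all
  have split: "D p y + D q y = D p q"
    using shortest_segment_split[OF seg closest_in_mem[OF y]] sym by simp
  have "sqrt \<epsilon> * min (D p y) (D q y) \<le> sqrt \<epsilon> * D p y"
    "sqrt \<epsilon> * min (D p y) (D q y) \<le> sqrt \<epsilon> * D q y"
    using \<open>0 \<le> \<epsilon>\<close> by (intro mult_left_mono; simp)+
  with near have near_p: "D x y \<le> sqrt \<epsilon> * D p y" and near_q: "D x y \<le> sqrt \<epsilon> * D q y"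
    by linarith+
  then have "(D x y)\<^sup>2 \<le> (sqrt \<epsilon> * D p y)\<^sup>2" "(D x y)\<^sup>2 \<le> (sqrt \<epsilon> * D q y)\<^sup>2"
    using \<open>0 \<le> D x y\<close> by (simp_all add: power_mono)
  then have near2: "(D x y)\<^sup>2 \<le> \<epsilon> * (D p y)\<^sup>2" "(D x y)\<^sup>2 \<le> \<epsilon> * (D q y)\<^sup>2"
    using \<open>0 \<le> \<epsilon>\<close> by (simp_all add: power_mult_distrib)
  show ?thesis
  proof (cases "0 < D p y \<and> 0 < D q y")
    case True
    with sides near2 have "D p x \<le> c * D p y" "D x q \<le> c * D q y"
      using sym[of x q] by simp_all
    moreover have "c * D p q = c * D p y + c * D q y"
      using split by (simp add: distrib_left[symmetric])
    ultimately show ?thesis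
      by linarith
  next
    case False
    then have "D x y \<le> 0"
      using near_p near_q \<open>0 \<le> D p y\<close> \<open>0 \<le> D q y\<close> by force
    with \<open>0 \<le> D x y\<close> xy have "x = y"
      by simp
    with split sym[of y q] \<open>1 \<le> c\<close> \<open>0 \<le> D p y\<close> \<open>0 \<le> D q y\<close> show ?thesis
      by (simp add: mult_le_cancel_right1)
  qed
qed

lemma deriv_nonpos_if_max_on_right:
  fixes f :: "real \<Rightarrow> real"
  assumes "DERIV f 0 :> l" "0 < a" "\<And>s. 0 < s \<Longrightarrow> s \<le> a \<Longrightarrow> f s \<le> f 0"
  shows "l \<le> 0"
proof (rule ccontr)
  assume "\<not> l \<le> 0"
  then obtain d where "d > 0" "\<forall>h>0. h < d \<longrightarrow> f 0 < f (0 + h)"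
    using DERIV_pos_inc_right[OF assms(1)] by auto
  define s where "s = min d a / 2"
  have "0 < s" "s < d" "s \<le> a"
    using \<open>d > 0\<close> assms(2) by (auto simp: s_def)
  with \<open>\<forall>h>0. h < d \<longrightarrow> f 0 < f (0 + h)\<close> assms(3)[of s] show False
    by auto
qed

section \<open>Euclidean space\<close>

lemma eq_scaleR_if_dist_add_eq:
  fixes y z p :: "'a::real_inner"
  assumes "dist y z + dist z p = dist y p" "y \<noteq> p"
  shows "z - y = (dist y z / dist y p) *\<^sub>R (p - y)"
proof -
  have "norm ((z - y) + (p - z)) = norm (z - y) + norm (p - z)"
    using assms(1) by (simp add: dist_norm norm_minus_commute)
  then have "dist y z *\<^sub>R (p - z) = dist z p *\<^sub>R (z - y)"
    unfolding norm_triangle_eq by (simp add: dist_norm norm_minus_commute)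
  then have "dist y p *\<^sub>R (z - y) = dist y z *\<^sub>R (p - y)"
    by (simp add: assms(1)[symmetric] algebra_simps)
  then have "(1 / dist y p) *\<^sub>R (dist y p *\<^sub>R (z - y)) = (dist y z / dist y p) *\<^sub>R (p - y)"
    by simp
  with assms(2) show ?thesis
    by simp
qed

lemma euclidean_closest_point_obtuse:
  fixes p q x y :: "'a::real_inner"
  assumes seg: "shortest_segment dist X p q S" and y: "closest_in dist S x y"
  shows "inner (x - y) (p - y) \<le> 0"
proof (cases "p = y")
  case False
  define f where "f t = 2 * t * inner (x - y) (p - y) - t\<^sup>2 * (norm (p - y))\<^sup>2" for t
  have "y \<in> S" and closest: "\<And>z. z \<in> S \<Longrightarrow> dist x y \<le> dist x z"
    using y by (auto simp: closest_in_def)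
  have "f t \<le> f 0" if "0 < t" "t \<le> 1" for t
  proof -
    have "0 \<le> t * dist p y" "t * dist p y \<le> dist p y"
      using that by (simp_all add: mult_left_le_one_le)
    then obtain z where z: "z \<in> S" "dist y z = t * dist p y" "dist p z = dist p y - t * dist p y"
      using shortest_segment_interpolate[OF seg \<open>y \<in> S\<close>] by blast
    then have "z - y = t *\<^sub>R (p - y)"
      using eq_scaleR_if_dist_add_eq[of y z p] False by (simp add: dist_commute)
    then have "x - z = (x - y) - t *\<^sub>R (p - y)"
      by (simp add: algebra_simps)
    then have "(norm (x - z))\<^sup>2 = (norm ((x - y) - t *\<^sub>R (p - y)))\<^sup>2"
      by (simp only:)
    also have "\<dots> = (norm (x - y))\<^sup>2 - f t"
      unfolding f_def power2_norm_eq_inner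
      by (simp add: inner_diff_left inner_diff_right inner_commute power2_eq_square algebra_simps)
    moreover have "(norm (x - y))\<^sup>2 \<le> (norm (x - z))\<^sup>2"
      using closest[OF z(1)] by (simp add: dist_norm power_mono)
    ultimately show ?thesis
      by (simp add: f_def)
  qed
  moreover have "DERIV f 0 :> 2 * inner (x - y) (p - y)"
    unfolding f_def by (auto intro!: derivative_eq_intros)
  ultimately have "2 * inner (x - y) (p - y) \<le> 0"
    using deriv_nonpos_if_max_on_right[of f _ 1] by auto
  then show ?thesis
    by simp
qed simp

lemma euclidean_closest_point_orthogonal:
  fixes p q x y :: "'a::real_inner"
  assumes seg: "shortest_segment dist X p q S" and y: "closest_in dist S x y" and "y \<noteq> q"
  shows "inner (x - y) (p - y) = 0"
proof -
  have "dist p y + dist y q = dist p q"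
    using shortest_segment_split[OF seg] y by (simp add: closest_in_def)
  then have "norm ((p - y) + (y - q)) = norm (p - y) + norm (y - q)"
    by (simp add: dist_norm)
  then have "dist q y *\<^sub>R (p - y) = - (dist p y *\<^sub>R (q - y))"
    unfolding norm_triangle_eq by (simp add: dist_norm norm_minus_commute algebra_simps)
  then have "dist q y * inner (x - y) (p - y) = - (dist p y * inner (x - y) (q - y))"
    by (metis inner_minus_right inner_scaleR_right)
  moreover have "inner (x - y) (q - y) \<le> 0"
    using euclidean_closest_point_obtuse[OF shortest_segment_reverse[OF seg] y] .
  ultimately have "0 \<le> dist q y * inner (x - y) (p - y)"
    by (simp add: mult_nonneg_nonpos)
  then have "0 \<le> inner (x - y) (p - y)"
    using \<open>y \<noteq> q\<close> by (simp add: zero_le_mult_iff)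
  with euclidean_closest_point_obtuse[OF seg y] show ?thesis
    by simp
qed

lemma euclidean_closest_point_pythagoras:
  fixes p q x y :: "'a::real_inner"
  assumes "shortest_segment dist X p q S" "closest_in dist S x y" "y \<noteq> q"
  shows "(dist p x)\<^sup>2 = (dist p y)\<^sup>2 + (dist x y)\<^sup>2"
proof -
  have "orthogonal (p - y) (y - x)"
    using euclidean_closest_point_orthogonal[OF assms]
    by (simp add: orthogonal_def inner_commute inner_diff_right)
  then show ?thesis
    using norm_add_Pythagorean[of "p - y" "y - x"] by (simp add: dist_norm norm_minus_commute)
qed

lemma hypotenuse_le:
  fixes a h c \<epsilon> :: real
  assumes "c\<^sup>2 = a\<^sup>2 + h\<^sup>2" "0 \<le> a" "0 \<le> \<epsilon>" "h\<^sup>2 \<le> \<epsilon> * a\<^sup>2"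
  shows "c \<le> (1 + \<epsilon>) * a"
proof -
  have "((1 + \<epsilon>) * a)\<^sup>2 = a\<^sup>2 + 2 * (\<epsilon> * a\<^sup>2) + \<epsilon> * (\<epsilon> * a\<^sup>2)"
    by (simp add: power2_eq_square algebra_simps)
  moreover have "0 \<le> \<epsilon> * a\<^sup>2" "0 \<le> \<epsilon> * (\<epsilon> * a\<^sup>2)"
    using assms(3) by simp_all
  ultimately have "c\<^sup>2 \<le> ((1 + \<epsilon>) * a)\<^sup>2"
    using assms(1,4) by linarith
  then show ?thesis
    using assms(2,3) by (simp add: abs_le_square_iff[symmetric])
qed

lemma euclidean_detour_le:
  fixes p q x y :: "'a::real_inner"
  assumes seg: "shortest_segment dist UNIV p q S" and y: "closest_in dist S x y"
    and "0 \<le> \<epsilon>" and near: "dist x y \<le> sqrt \<epsilon> * min (dist p y) (dist q y)"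
  shows "dist p x + dist x q \<le> (1 + \<epsilon>) * dist p q"
proof (rule detour_le_if_sides_le[OF seg y _ dist_commute _ _ \<open>0 \<le> \<epsilon>\<close> near])
  assume "0 < dist p y" "0 < dist q y"
    "(dist x y)\<^sup>2 \<le> \<epsilon> * (dist p y)\<^sup>2" "(dist x y)\<^sup>2 \<le> \<epsilon> * (dist q y)\<^sup>2"
  then show "dist p x \<le> (1 + \<epsilon>) * dist p y \<and> dist q x \<le> (1 + \<epsilon>) * dist q y"
    using euclidean_closest_point_pythagoras[OF seg y]
      euclidean_closest_point_pythagoras[OF shortest_segment_reverse[OF seg] y]
      \<open>0 \<le> \<epsilon>\<close> by (auto intro: hypotenuse_le)
qed (use \<open>0 \<le> \<epsilon>\<close> in auto)

section \<open>The sphere\<close>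

lemma mult_cos_le_sin:
  fixes x :: real
  assumes "0 \<le> x" "x \<le> pi"
  shows "x * cos x \<le> sin x"
proof -
  have "(\<lambda>t. sin t - t * cos t) 0 \<le> (\<lambda>t. sin t - t * cos t) x"
  proof (rule DERIV_nonneg_imp_nondecreasing[OF assms(1)])
    fix t assume "0 \<le> t" "t \<le> x"
    with assms have "0 \<le> t * sin t"
      by (simp add: sin_ge_zero)
    moreover have "DERIV (\<lambda>t. sin t - t * cos t) t :> t * sin t"
      by (auto intro!: derivative_eq_intros simp: algebra_simps)
    ultimately show "\<exists>y. DERIV (\<lambda>t. sin t - t * cos t) t :> y \<and> 0 \<le> y"
      by blast
  qed
  then show ?thesis
    by simp
qed

lemma one_minus_square_div_two_le_cos:
  fixes x :: real
  shows "1 - x\<^sup>2 / 2 \<le> cos x"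
proof -
  have "(\<lambda>t. cos t - 1 + t\<^sup>2 / 2) 0 \<le> (\<lambda>t. cos t - 1 + t\<^sup>2 / 2) \<bar>x\<bar>"
  proof (rule DERIV_nonneg_imp_nondecreasing[OF abs_ge_zero])
    fix t :: real assume "0 \<le> t" "t \<le> \<bar>x\<bar>"
    then have "0 \<le> t - sin t"
      using sin_x_le_x by simp
    moreover have "DERIV (\<lambda>t. cos t - 1 + t\<^sup>2 / 2) t :> t - sin t"
      by (auto intro!: derivative_eq_intros simp: algebra_simps)
    ultimately show "\<exists>y. DERIV (\<lambda>t. cos t - 1 + t\<^sup>2 / 2) t :> y \<and> 0 \<le> y"
      by blast
  qed
  then show ?thesis
    by simp
qed

lemma mult_sin_le_sin_mult:
  fixes t a :: real
  assumes "0 \<le> t" "t \<le> 1" "0 \<le> a" "a \<le> pi"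
  shows "t * sin a \<le> sin (t * a)"
proof -
  have "(\<lambda>u. sin (t * u) - t * sin u) 0 \<le> (\<lambda>u. sin (t * u) - t * sin u) a"
  proof (rule DERIV_nonneg_imp_nondecreasing[OF assms(3)])
    fix u assume "0 \<le> u" "u \<le> a"
    moreover from this have "t * u \<le> u"
      using assms(1,2) by (simp add: mult_left_le_one_le)
    ultimately have "cos u \<le> cos (t * u)"
      using assms by (intro cos_monotone_0_pi_le) auto
    then have "0 \<le> t * (cos (t * u) - cos u)"
      using assms(1) by simp
    moreover have "DERIV (\<lambda>u. sin (t * u) - t * sin u) u :> t * (cos (t * u) - cos u)"
      by (auto intro!: derivative_eq_intros simp: algebra_simps)
    ultimately show "\<exists>y. DERIV (\<lambda>u. sin (t * u) - t * sin u) u :> y \<and> 0 \<le> y"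
      by blast
  qed
  then show ?thesis
    by simp
qed

lemma square_mult_cos_le_sin_square:
  fixes a :: real
  assumes "0 \<le> a" "a \<le> pi / 2"
  shows "a\<^sup>2 * cos a \<le> 2 * (sin a)\<^sup>2"
proof (cases "1 / 2 \<le> cos a")
  case True
  have "a * cos a \<le> sin a"
    using assms by (intro mult_cos_le_sin) auto
  moreover have "0 \<le> a * cos a"
    using True assms(1) by simp
  ultimately have "(a * cos a)\<^sup>2 \<le> (sin a)\<^sup>2"
    by (rule power_mono)
  moreover have "a\<^sup>2 * cos a * 1 \<le> a\<^sup>2 * cos a * (2 * cos a)"
    using True by (intro mult_left_mono) auto
  ultimately show ?thesis
    by (simp add: power2_eq_square algebra_simps)
next
  case False
  have "2 * a / pi * sin (pi / 2) \<le> sin (2 * a / pi * (pi / 2))"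
    using assms by (intro mult_sin_le_sin_mult) (auto simp: field_simps)
  then have "2 * a / pi \<le> sin a"
    by simp
  then have "(2 * a / pi)\<^sup>2 \<le> (sin a)\<^sup>2"
    using assms(1) by (intro power_mono) auto
  moreover have "pi\<^sup>2 \<le> 4\<^sup>2"
    using pi_less_4 by (intro power_mono) auto
  then have "pi\<^sup>2 * a\<^sup>2 \<le> 16 * a\<^sup>2"
    by (intro mult_right_mono) auto
  then have "a\<^sup>2 / 2 \<le> 2 * (2 * a / pi)\<^sup>2"
    by (simp add: power_divide field_simps)
  moreover have "a\<^sup>2 * cos a \<le> a\<^sup>2 * (1 / 2)"
    using False by (intro mult_left_mono) auto
  ultimately show ?thesis
    by linarith
qed

lemma cos_add_le_cos_mult_cos:
  fixes a h \<epsilon> :: real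
  assumes "0 \<le> a" "a \<le> pi / 2" "0 \<le> \<epsilon>" "\<epsilon> \<le> 1" "h\<^sup>2 \<le> \<epsilon> * a\<^sup>2"
  shows "cos (a + \<epsilon> * a) \<le> cos a * cos h"
proof -
  have "cos (\<epsilon> * a) - cos h \<le> \<epsilon> * a\<^sup>2 / 2"
    using one_minus_square_div_two_le_cos[of h] cos_le_one[of "\<epsilon> * a"] assms(5) by linarith
  then have "cos a * (cos (\<epsilon> * a) - cos h) \<le> cos a * (\<epsilon> * a\<^sup>2 / 2)"
    using assms(1,2) by (intro mult_left_mono cos_ge_zero) auto
  also have "\<dots> \<le> sin a * (\<epsilon> * sin a)"
    using square_mult_cos_le_sin_square[OF assms(1,2)] assms(3)
    by (simp add: power2_eq_square algebra_simps mult_left_mono)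
  also have "\<dots> \<le> sin a * sin (\<epsilon> * a)"
    using assms(1-4) by (intro mult_left_mono mult_sin_le_sin_mult sin_ge_zero) auto
  finally show ?thesis
    by (simp add: cos_add algebra_simps)
qed

lemma spherical_hypotenuse_le:
  fixes a h c \<epsilon> :: real
  assumes "cos c = cos a * cos h" "0 \<le> c" "c \<le> pi" "0 < a" "a < pi"
    and "0 \<le> \<epsilon>" "\<epsilon> \<le> 1" "h\<^sup>2 \<le> \<epsilon> * a\<^sup>2"
  shows "c \<le> (1 + \<epsilon>) * a"
proof -
  have c: "c = arccos (cos a * cos h)"
    using assms(1-3) arccos_cos[of c] by simp
  have bounds: "- 1 \<le> cos a * cos h" "cos a * cos h \<le> 1"
    using abs_le_iff[of "cos a * cos h" 1] by (simp_all add: abs_mult mult_le_one)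
  show ?thesis
  proof (cases "pi / 2 \<le> a")
    case True
    then have "cos a \<le> 0"
      using assms(5) cos_monotone_0_pi_le[of "pi / 2" a] by simp
    then have "cos a \<le> cos a * cos h"
      using mult_left_mono_neg[OF cos_le_one[of h]] by simp
    then have "c \<le> arccos (cos a)"
      unfolding c using bounds by (intro arccos_le_arccos) auto
    also have "\<dots> = a"
      using assms(4,5) by (simp add: arccos_cos)
    moreover have "0 \<le> \<epsilon> * a"
      using assms(4,6) by simp
    ultimately show ?thesis
      by (simp only: distrib_right mult_1_left)
  next
    case False
    then have "cos (a + \<epsilon> * a) \<le> cos a * cos h"
      using assms(4,6-8) by (intro cos_add_le_cos_mult_cos) auto
    then have "c \<le> arccos (cos (a + \<epsilon> * a))"
      unfolding c using bounds by (intro arccos_le_arccos) auto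
    also have "\<dots> = a + \<epsilon> * a"
    proof -
      have "0 \<le> \<epsilon> * a" "\<epsilon> * a \<le> a"
        using assms(4,6,7) by (simp_all add: mult_left_le_one_le)
      with False show ?thesis
        by (intro arccos_cos) linarith+
    qed
    finally show ?thesis
      by (simp add: algebra_simps)
  qed
qed

lemma eq_if_inner_eq_1:
  fixes z w :: "'a::real_inner"
  assumes "inner z z = 1" "inner w w = 1" "inner z w = 1"
  shows "z = w"
proof -
  have "inner (z - w) (z - w) = 0"
    using assms by (simp add: inner_diff inner_commute)
  then show ?thesis
    by simp
qed

lemma eq_orthonormal_combination:
  fixes y e z :: "'a::real_inner"
  assumes "inner y y = 1" "inner e e = 1" "inner y e = 0"
    and "inner z y = c" "inner z e = \<sigma>" "inner z z = c\<^sup>2 + \<sigma>\<^sup>2"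
  shows "z = c *\<^sub>R y + \<sigma> *\<^sub>R e"
proof -
  have "inner (z - (c *\<^sub>R y + \<sigma> *\<^sub>R e)) (z - (c *\<^sub>R y + \<sigma> *\<^sub>R e)) = 0"
    using assms by (simp add: inner_diff inner_add inner_commute power2_eq_square algebra_simps)
  then show ?thesis
    by simp
qed

lemma inner_self_sph_space: "z \<in> sph_space \<Longrightarrow> inner z z = 1"
  by (simp add: sph_space_def flip: power2_norm_eq_inner)

lemma abs_inner_sph_space_le: "z \<in> sph_space \<Longrightarrow> w \<in> sph_space \<Longrightarrow> \<bar>inner z w\<bar> \<le> 1"
  using Cauchy_Schwarz_ineq2[of z w] by (simp add: sph_space_def)

lemma cos_sph_dist: "z \<in> sph_space \<Longrightarrow> w \<in> sph_space \<Longrightarrow> cos (sph_dist z w) = inner z w"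
  using abs_inner_sph_space_le[of z w] by (simp add: sph_dist_def abs_le_iff)

lemma sph_dist_bounds: "z \<in> sph_space \<Longrightarrow> w \<in> sph_space \<Longrightarrow> 0 \<le> sph_dist z w \<and> sph_dist z w \<le> pi"
  using abs_inner_sph_space_le[of z w] by (simp add: sph_dist_def abs_le_iff arccos_bounded)

lemma sph_dist_commute: "sph_dist z w = sph_dist w z"
  by (simp add: sph_dist_def inner_commute)

lemma sph_dist_eq_0_iff: "z \<in> sph_space \<Longrightarrow> w \<in> sph_space \<Longrightarrow> sph_dist z w = 0 \<longleftrightarrow> z = w"
  using abs_inner_sph_space_le[of z w] eq_if_inner_eq_1[of z w] inner_self_sph_space[of z]
    inner_self_sph_space[of w]
  by (auto simp: sph_dist_def abs_le_iff arccos_eq_0_iff)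

lemma sph_dist_le_iff:
  "\<lbrakk>x \<in> sph_space; y \<in> sph_space; z \<in> sph_space\<rbrakk>
    \<Longrightarrow> sph_dist x y \<le> sph_dist x z \<longleftrightarrow> inner x z \<le> inner x y"
  unfolding sph_dist_def by (simp add: arccos_le_mono abs_inner_sph_space_le)

lemma shortest_segment_sph_dist_lt_pi:
  assumes seg: "shortest_segment sph_dist sph_space p q S" and "y \<in> S" "0 < sph_dist q y"
  shows "sph_dist p y < pi"
proof -
  note mem = shortest_segment_mem[OF seg \<open>y \<in> S\<close>]
  have "sph_dist p y + sph_dist q y = sph_dist p q"
    using shortest_segment_split[OF seg \<open>y \<in> S\<close>] by (simp add: sph_dist_commute)
  then show ?thesis
    using sph_dist_bounds[OF mem(1,2)] assms(3) by linarith
qed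

text \<open>The initial unit vector of the great circle arc from \<open>y\<close> to \<open>p\<close>.\<close>

definition sph_direction :: "real \<times> 'a::euclidean_space \<Rightarrow> real \<times> 'a \<Rightarrow> real \<times> 'a" where
  "sph_direction y p = (1 / sin (sph_dist p y)) *\<^sub>R (p - cos (sph_dist p y) *\<^sub>R y)"

lemma sph_direction_orthonormal:
  assumes p: "p \<in> sph_space" and y: "y \<in> sph_space" and "0 < sph_dist p y" "sph_dist p y < pi"
  shows "inner (sph_direction y p) y = 0" "inner (sph_direction y p) (sph_direction y p) = 1"
proof -
  define a e where "a = sph_dist p y" and "e = sph_direction y p"
  have "sin a > 0"
    using assms(3,4) by (simp add: a_def sin_gt_zero)
  have py: "inner p y = cos a" and yy: "inner y y = 1" and pp: "inner p p = 1"
    using cos_sph_dist[OF p y] inner_self_sph_space[OF y] inner_self_sph_space[OF p]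
    by (simp_all add: a_def)
  then show "inner (sph_direction y p) y = 0"
    by (simp add: sph_direction_def a_def[symmetric] inner_diff_left)
  have "inner e e = (1 / sin a)\<^sup>2 * (inner p p - 2 * cos a * inner p y + (cos a)\<^sup>2 * inner y y)"
    by (simp add: e_def sph_direction_def a_def[symmetric] inner_diff_left inner_diff_right
        inner_commute power2_eq_square algebra_simps)
  also have "\<dots> = (1 / sin a)\<^sup>2 * (sin a)\<^sup>2"
    using pp py yy sin_cos_squared_add[of a] by (simp add: power2_eq_square algebra_simps)
  also have "\<dots> = 1"
    using \<open>sin a > 0\<close> by (simp add: power2_eq_square)
  finally show "inner (sph_direction y p) (sph_direction y p) = 1"
    by (simp add: e_def)
qed

lemma sph_direction_endpoint:
  assumes "0 < sph_dist p y" "sph_dist p y < pi"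
  shows "p = cos (sph_dist p y) *\<^sub>R y + sin (sph_dist p y) *\<^sub>R sph_direction y p"
  using sin_gt_zero[OF assms] by (simp add: sph_direction_def)

lemma sphere_geodesic_point_eq:
  assumes p: "p \<in> sph_space" and y: "y \<in> sph_space" and z: "z \<in> sph_space"
    and "0 < sph_dist p y" "sph_dist p y < pi"
    and "sph_dist y z = s" "sph_dist p z = sph_dist p y - s"
  shows "z = cos s *\<^sub>R y + sin s *\<^sub>R sph_direction y p"
proof -
  define a where "a = sph_dist p y"
  have "sin a > 0"
    using assms(4,5) by (simp add: a_def sin_gt_zero)
  have zy: "inner z y = cos s"
    using cos_sph_dist[OF y z] assms(6) by (simp add: inner_commute)
  have "inner z p = cos a * cos s + sin a * sin s"
    using cos_sph_dist[OF p z] assms(7) cos_diff[of a s] by (simp add: a_def inner_commute)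
  then have "inner z (sph_direction y p) = sin s"
    using zy \<open>sin a > 0\<close>
    by (simp add: sph_direction_def a_def[symmetric] inner_diff_right field_simps)
  with zy show ?thesis
    using sph_direction_orthonormal[OF p y assms(4,5)] inner_self_sph_space[OF y]
      inner_self_sph_space[OF z]
    by (intro eq_orthonormal_combination) (simp_all add: inner_commute)
qed

lemma sph_direction_opposite:
  fixes p q y :: "real \<times> 'a::euclidean_space"
  assumes seg: "shortest_segment sph_dist sph_space p q S"
    and "y \<in> S" "0 < sph_dist p y" "0 < sph_dist q y"
  shows "sph_direction y q = - sph_direction y p"
proof -
  define a b e e' where "a = sph_dist p y" and "b = sph_dist q y"
    and "e = sph_direction y p" and "e' = sph_direction y q"
  note mem = shortest_segment_mem[OF seg \<open>y \<in> S\<close>]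
  have "a < pi" "b < pi"
    using shortest_segment_sph_dist_lt_pi[OF seg \<open>y \<in> S\<close> assms(4)]
      shortest_segment_sph_dist_lt_pi[OF shortest_segment_reverse[OF seg] \<open>y \<in> S\<close> assms(3)]
    by (simp_all add: a_def b_def)
  have "a + b = sph_dist p q"
    using shortest_segment_split[OF seg \<open>y \<in> S\<close>] by (simp add: a_def b_def sph_dist_commute)
  have ey: "inner e y = 0" and ee: "inner e e = 1" and e'y: "inner e' y = 0" and e'e': "inner e' e' = 1"
    using sph_direction_orthonormal[OF mem(1,3) assms(3) \<open>a < pi\<close>[unfolded a_def]]
      sph_direction_orthonormal[OF mem(2,3) assms(4) \<open>b < pi\<close>[unfolded b_def]]
    by (simp_all add: e_def e'_def)
  have pe: "p = cos a *\<^sub>R y + sin a *\<^sub>R e" and qe': "q = cos b *\<^sub>R y + sin b *\<^sub>R e'"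
    using sph_direction_endpoint[OF assms(3) \<open>a < pi\<close>[unfolded a_def]]
      sph_direction_endpoint[OF assms(4) \<open>b < pi\<close>[unfolded b_def]]
    by (simp_all add: a_def b_def e_def e'_def)
  have "cos a * cos b - sin a * sin b = cos (a + b)"
    by (simp add: cos_add)
  also have "\<dots> = inner p q"
    using cos_sph_dist[OF mem(1,2)] \<open>a + b = sph_dist p q\<close> by simp
  also have "\<dots> = inner (cos a *\<^sub>R y + sin a *\<^sub>R e) (cos b *\<^sub>R y + sin b *\<^sub>R e')"
    using pe qe' by simp
  also have "\<dots> = cos a * cos b * inner y y + cos a * sin b * inner y e'
      + sin a * cos b * inner e y + sin a * sin b * inner e e'"
    by (simp add: inner_add_left inner_add_right algebra_simps)
  also have "\<dots> = cos a * cos b + sin a * sin b * inner e e'"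
    using inner_self_sph_space[OF mem(3)] ey e'y by (simp add: inner_commute)
  finally have "sin a * sin b * inner e e' = sin a * sin b * (- 1)"
    by (simp add: algebra_simps)
  moreover have "0 < sin a" "0 < sin b"
    using assms(3,4) \<open>a < pi\<close> \<open>b < pi\<close> by (simp_all add: a_def b_def sin_gt_zero)
  then have "sin a * sin b \<noteq> 0"
    by simp
  ultimately have "inner e e' = - 1"
    by (metis mult_left_cancel)
  then have "inner e' (- e) = 1"
    by (simp add: inner_commute)
  then show ?thesis
    using ee e'e' eq_if_inner_eq_1[of e' "- e"] by (simp add: e_def e'_def)
qed

lemma sphere_closest_point_tangent:
  fixes p q x y :: "real \<times> 'a::euclidean_space"
  assumes seg: "shortest_segment sph_dist sph_space p q S" and y: "closest_in sph_dist S x y"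
    and x: "x \<in> sph_space" and "0 < sph_dist p y" "sph_dist p y < pi"
  shows "inner x (sph_direction y p) \<le> 0"
proof -
  define e where "e = sph_direction y p"
  note mem = shortest_segment_mem[OF seg closest_in_mem[OF y]]
  define f where "f s = inner x y * cos s + inner x e * sin s" for s
  have max: "f s \<le> f 0" if "0 < s" "s \<le> sph_dist p y" for s
  proof -
    from that have "0 \<le> s" "s \<le> sph_dist p y"
      by simp_all
    then obtain z where z: "z \<in> S" "sph_dist y z = s" "sph_dist p z = sph_dist p y - s"
      by (rule shortest_segment_interpolate[OF seg closest_in_mem[OF y]])
    then have "z \<in> sph_space"
      using mem(4) by auto
    with z have "z = cos s *\<^sub>R y + sin s *\<^sub>R e"
      unfolding e_def using sphere_geodesic_point_eq[OF mem(1,3)] assms(4,5) by blast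
    moreover have "inner x z \<le> inner x y"
      using y z(1) sph_dist_le_iff[OF x mem(3) \<open>z \<in> sph_space\<close>] by (simp add: closest_in_def)
    ultimately show ?thesis
      by (simp add: f_def inner_add_right mult.commute)
  qed
  have "DERIV f 0 :> inner x e"
    unfolding f_def by (auto intro!: derivative_eq_intros)
  then show ?thesis
    using assms(4) max unfolding e_def by (rule deriv_nonpos_if_max_on_right)
qed

lemma sphere_closest_point_orthogonal:
  fixes p q x y :: "real \<times> 'a::euclidean_space"
  assumes seg: "shortest_segment sph_dist sph_space p q S" and y: "closest_in sph_dist S x y"
    and x: "x \<in> sph_space" and "0 < sph_dist p y" "0 < sph_dist q y"
  shows "inner x (sph_direction y p) = 0"
proof -
  have "sph_dist p y < pi" "sph_dist q y < pi"
    using shortest_segment_sph_dist_lt_pi[OF seg closest_in_mem[OF y] assms(5)]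
      shortest_segment_sph_dist_lt_pi[OF shortest_segment_reverse[OF seg] closest_in_mem[OF y]
        assms(4)]
    by simp_all
  then have "inner x (sph_direction y p) \<le> 0" "inner x (sph_direction y q) \<le> 0"
    using sphere_closest_point_tangent[OF seg y x assms(4)]
      sphere_closest_point_tangent[OF shortest_segment_reverse[OF seg] y x assms(5)]
    by simp_all
  with sph_direction_opposite[OF seg closest_in_mem[OF y] assms(4,5)] show ?thesis
    by simp
qed

lemma sphere_closest_point_pythagoras:
  fixes p q x y :: "real \<times> 'a::euclidean_space"
  assumes seg: "shortest_segment sph_dist sph_space p q S" and y: "closest_in sph_dist S x y"
    and x: "x \<in> sph_space" and "0 < sph_dist p y" "0 < sph_dist q y"
  shows "cos (sph_dist p x) = cos (sph_dist p y) * cos (sph_dist x y)"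
proof -
  define a e where "a = sph_dist p y" and "e = sph_direction y p"
  note mem = shortest_segment_mem[OF seg closest_in_mem[OF y]]
  have "a < pi"
    using shortest_segment_sph_dist_lt_pi[OF seg closest_in_mem[OF y] assms(5)] by (simp add: a_def)
  then have "p = cos a *\<^sub>R y + sin a *\<^sub>R e"
    using sph_direction_endpoint[OF assms(4)] by (simp add: a_def e_def)
  moreover have "inner x e = 0"
    using sphere_closest_point_orthogonal[OF assms] by (simp add: e_def)
  ultimately have "inner p x = cos a * inner y x"
    by (simp add: inner_add_left inner_commute[of e x])
  then show ?thesis
    using cos_sph_dist[OF mem(1) x] cos_sph_dist[OF mem(3) x] by (simp add: a_def sph_dist_commute)
qed

lemma sphere_detour_le:
  fixes p q x y :: "real \<times> 'a::euclidean_space"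
  assumes seg: "shortest_segment sph_dist sph_space p q S" and y: "closest_in sph_dist S x y"
    and x: "x \<in> sph_space" and "0 \<le> \<epsilon>" "\<epsilon> \<le> 1"
    and near: "sph_dist x y \<le> sqrt \<epsilon> * min (sph_dist p y) (sph_dist q y)"
  shows "sph_dist p x + sph_dist x q \<le> (1 + \<epsilon>) * sph_dist p q"
proof (rule detour_le_if_sides_le[OF seg y x sph_dist_commute _ _ \<open>0 \<le> \<epsilon>\<close> near])
  note mem = shortest_segment_mem[OF seg closest_in_mem[OF y]]
  assume "0 < sph_dist p y" "0 < sph_dist q y"
    "(sph_dist x y)\<^sup>2 \<le> \<epsilon> * (sph_dist p y)\<^sup>2" "(sph_dist x y)\<^sup>2 \<le> \<epsilon> * (sph_dist q y)\<^sup>2"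
  moreover from this have "sph_dist p y < pi" "sph_dist q y < pi"
    using shortest_segment_sph_dist_lt_pi[OF seg closest_in_mem[OF y]]
      shortest_segment_sph_dist_lt_pi[OF shortest_segment_reverse[OF seg] closest_in_mem[OF y]]
    by simp_all
  ultimately show "sph_dist p x \<le> (1 + \<epsilon>) * sph_dist p y \<and> sph_dist q x \<le> (1 + \<epsilon>) * sph_dist q y"
    using sphere_closest_point_pythagoras[OF seg y x]
      sphere_closest_point_pythagoras[OF shortest_segment_reverse[OF seg] y x]
      sph_dist_bounds[OF mem(1) x] sph_dist_bounds[OF mem(2) x] assms(4,5)
    by (auto intro: spherical_hypotenuse_le)
qed (simp_all add: sph_dist_bounds sph_dist_eq_0_iff assms(4))

section \<open>Hyperbolic space\<close>

lemma le_sinh: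
  fixes x :: real
  assumes "0 \<le> x"
  shows "x \<le> sinh x"
proof -
  have "(\<lambda>t. sinh t - t) 0 \<le> (\<lambda>t. sinh t - t) x"
  proof (rule DERIV_nonneg_imp_nondecreasing[OF assms])
    fix t :: real
    have "DERIV (\<lambda>t. sinh t - t) t :> cosh t - 1"
      by (auto intro!: derivative_eq_intros)
    moreover have "0 \<le> cosh t - 1"
      using cosh_real_ge_1[of t] by simp
    ultimately show "\<exists>y. DERIV (\<lambda>t. sinh t - t) t :> y \<and> 0 \<le> y"
      by blast
  qed
  then show ?thesis
    by simp
qed

lemma sinh_le_mult_cosh:
  fixes x :: real
  assumes "0 \<le> x"
  shows "sinh x \<le> x * cosh x"
proof -
  have "(\<lambda>t. t * cosh t - sinh t) 0 \<le> (\<lambda>t. t * cosh t - sinh t) x"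
  proof (rule DERIV_nonneg_imp_nondecreasing[OF assms])
    fix t :: real assume "0 \<le> t"
    then have "0 \<le> t * sinh t"
      by simp
    moreover have "DERIV (\<lambda>t. t * cosh t - sinh t) t :> t * sinh t"
      by (auto intro!: derivative_eq_intros simp: algebra_simps)
    ultimately show "\<exists>y. DERIV (\<lambda>t. t * cosh t - sinh t) t :> y \<and> 0 \<le> y"
      by blast
  qed
  then show ?thesis
    by simp
qed

lemma cosh_minus_1_le:
  fixes x :: real
  assumes "0 \<le> x"
  shows "cosh x - 1 \<le> x * sinh x / 2"
proof -
  have "(\<lambda>t. t * sinh t / 2 - cosh t) 0 \<le> (\<lambda>t. t * sinh t / 2 - cosh t) x"
  proof (rule DERIV_nonneg_imp_nondecreasing[OF assms])
    fix t :: real assume "0 \<le> t"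
    then have "0 \<le> (t * cosh t - sinh t) / 2"
      using sinh_le_mult_cosh[of t] by simp
    moreover have "DERIV (\<lambda>t. t * sinh t / 2 - cosh t) t :> (t * cosh t - sinh t) / 2"
      by (auto intro!: derivative_eq_intros simp: algebra_simps)
    ultimately show "\<exists>y. DERIV (\<lambda>t. t * sinh t / 2 - cosh t) t :> y \<and> 0 \<le> y"
      by blast
  qed
  then show ?thesis
    by simp
qed

lemma sinh_mult_le_mult_sinh:
  fixes t a :: real
  assumes "0 \<le> t" "t \<le> 1" "0 \<le> a"
  shows "sinh (t * a) \<le> t * sinh a"
proof -
  have "(\<lambda>u. t * sinh u - sinh (t * u)) 0 \<le> (\<lambda>u. t * sinh u - sinh (t * u)) a"
  proof (rule DERIV_nonneg_imp_nondecreasing[OF assms(3)])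
    fix u :: real assume "0 \<le> u"
    moreover from this have "t * u \<le> u"
      using assms(1,2) by (simp add: mult_left_le_one_le)
    ultimately have "cosh (t * u) \<le> cosh u"
      using assms(1) by (simp add: cosh_real_nonneg_le_iff)
    then have "0 \<le> t * (cosh u - cosh (t * u))"
      using assms(1) by simp
    moreover have "DERIV (\<lambda>u. t * sinh u - sinh (t * u)) u :> t * (cosh u - cosh (t * u))"
      by (auto intro!: derivative_eq_intros simp: algebra_simps)
    ultimately show "\<exists>y. DERIV (\<lambda>u. t * sinh u - sinh (t * u)) u :> y \<and> 0 \<le> y"
      by blast
  qed
  then show ?thesis
    by simp
qed

lemma cosh_minus_1_le_mult_sinh:
  fixes a h \<epsilon> :: real
  assumes "0 < a" "0 \<le> h" "h \<le> a" "h\<^sup>2 \<le> \<epsilon> * a\<^sup>2"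
  shows "cosh h - 1 \<le> \<epsilon> * a * sinh a / 2"
proof -
  have "sinh h = sinh (h / a * a)"
    using assms(1) by simp
  also have "\<dots> \<le> h / a * sinh a"
    using assms(1-3) by (intro sinh_mult_le_mult_sinh) auto
  finally have "sinh h \<le> h / a * sinh a" .
  have "cosh h - 1 \<le> h * sinh h / 2"
    using cosh_minus_1_le[OF assms(2)] .
  also have "\<dots> \<le> h * (h / a * sinh a) / 2"
    using mult_left_mono[OF \<open>sinh h \<le> h / a * sinh a\<close> assms(2)] by (rule divide_right_mono) simp
  also have "\<dots> = h\<^sup>2 * (sinh a / a) / 2"
    by (simp add: power2_eq_square)
  also have "\<dots> \<le> \<epsilon> * a\<^sup>2 * (sinh a / a) / 2"
    using assms(1,4) by (intro divide_right_mono mult_right_mono) auto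
  also have "\<dots> = \<epsilon> * a * sinh a / 2"
    using assms(1) by (simp add: power2_eq_square)
  finally show ?thesis .
qed

lemma cosh_mult_cosh_le_cosh_add:
  fixes a h \<epsilon> \<Delta> :: real
  assumes "0 < a" "a \<le> \<Delta>" "0 \<le> h" "0 \<le> \<epsilon>" "\<epsilon> \<le> 1" "h\<^sup>2 \<le> \<epsilon> * a\<^sup>2"
  shows "cosh a * cosh h \<le> cosh (a + exp \<Delta> * \<epsilon> * a)"
proof -
  define \<delta> where "\<delta> = exp \<Delta> * \<epsilon> * a"
  have "\<epsilon> * a\<^sup>2 \<le> a\<^sup>2"
    by (rule mult_left_le_one_le) (use assms(4,5) in simp_all)
  with assms(6) have "h\<^sup>2 \<le> a\<^sup>2"
    by linarith
  then have "h \<le> a"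
    by (rule power2_le_imp_le) (use assms(1) in simp)
  have "0 \<le> sinh a" "exp a \<le> exp \<Delta>"
    using assms(1,2) by simp_all
  then have "cosh a \<le> exp \<Delta>"
    using cosh_plus_sinh[of a] by linarith
  have "cosh a * (cosh h - 1) \<le> exp \<Delta> * (\<epsilon> * a * sinh a / 2)"
    using cosh_minus_1_le_mult_sinh[OF assms(1,3) \<open>h \<le> a\<close> assms(6)] \<open>cosh a \<le> exp \<Delta>\<close>
      cosh_real_ge_1[of h] assms(1,4)
    by (intro mult_mono) auto
  also have "\<dots> \<le> sinh a * \<delta>"
    using assms(1,4) by (simp add: \<delta>_def)
  also have "\<dots> \<le> sinh a * sinh \<delta>"
    using le_sinh[of \<delta>] assms(1,4) by (simp add: \<delta>_def mult_left_mono)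
  finally have "cosh a * cosh h \<le> cosh a * 1 + sinh a * sinh \<delta>"
    by (simp add: algebra_simps)
  also have "\<dots> \<le> cosh (a + \<delta>)"
    using cosh_real_ge_1[of \<delta>] by (simp add: cosh_add)
  finally show ?thesis
    by (simp add: \<delta>_def)
qed

lemma hyperbolic_hypotenuse_le:
  fixes a h c \<epsilon> \<Delta> :: real
  assumes "cosh c = cosh a * cosh h" "0 \<le> c" "0 < a" "a \<le> \<Delta>" "0 \<le> h"
    and "0 \<le> \<epsilon>" "\<epsilon> \<le> 1" "h\<^sup>2 \<le> \<epsilon> * a\<^sup>2"
  shows "c \<le> (1 + exp \<Delta> * \<epsilon>) * a"
proof -
  have "cosh c \<le> cosh (a + exp \<Delta> * \<epsilon> * a)"
    using assms(1) cosh_mult_cosh_le_cosh_add[OF assms(3-8)] by simp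
  then have "c \<le> a + exp \<Delta> * \<epsilon> * a"
    using assms(2,3,6) by (simp add: cosh_real_nonneg_le_iff)
  then show ?thesis
    by (simp add: algebra_simps)
qed

lemma minkowski_commute: "minkowski z w = minkowski w z"
  by (simp add: minkowski_def inner_commute)

lemma minkowski_add_left: "minkowski (u + v) w = minkowski u w + minkowski v w"
  and minkowski_add_right: "minkowski w (u + v) = minkowski w u + minkowski w v"
  and minkowski_diff_left: "minkowski (u - v) w = minkowski u w - minkowski v w"
  and minkowski_diff_right: "minkowski w (u - v) = minkowski w u - minkowski w v"
  and minkowski_scaleR_left: "minkowski (c *\<^sub>R u) w = c * minkowski u w"
  and minkowski_scaleR_right: "minkowski w (c *\<^sub>R u) = c * minkowski w u"
  and minkowski_minus_left: "minkowski (- u) w = - minkowski u w"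
  and minkowski_minus_right: "minkowski w (- u) = - minkowski w u"
  by (simp_all add: minkowski_def inner_add_left inner_add_right inner_diff_left inner_diff_right
      algebra_simps)

lemmas minkowski_bilinear = minkowski_add_left minkowski_add_right minkowski_diff_left
  minkowski_diff_right minkowski_scaleR_left minkowski_scaleR_right minkowski_minus_left
  minkowski_minus_right

lemma minkowski_self_hyp_space: "z \<in> hyp_space \<Longrightarrow> minkowski z z = 1"
  by (cases z) (simp add: hyp_space_def minkowski_def power2_eq_square flip: power2_norm_eq_inner)

lemma one_le_minkowski_hyp_space:
  assumes "z \<in> hyp_space" "w \<in> hyp_space"
  shows "1 \<le> minkowski z w"
proof -
  obtain t u s v where zw: "z = (t, u)" "w = (s, v)"
    by (cases z, cases w)
  with assms have "0 < t" "t\<^sup>2 = 1 + (norm u)\<^sup>2" "0 < s" "s\<^sup>2 = 1 + (norm v)\<^sup>2"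
    by (auto simp: hyp_space_def)
  then have "(t * s)\<^sup>2 = (1 + (norm u)\<^sup>2) * (1 + (norm v)\<^sup>2)"
    by (simp add: power_mult_distrib)
  also have "\<dots> = (1 + norm u * norm v)\<^sup>2 + (norm u - norm v)\<^sup>2"
    by (simp add: power2_eq_square algebra_simps)
  finally have "(1 + norm u * norm v)\<^sup>2 + (norm u - norm v)\<^sup>2 = (t * s)\<^sup>2"
    by simp
  then have "(1 + norm u * norm v)\<^sup>2 \<le> (t * s)\<^sup>2"
    by (metis le_add_same_cancel1 zero_le_power2)
  then have "1 + norm u * norm v \<le> t * s"
    by (rule power2_le_imp_le) (use \<open>0 < t\<close> \<open>0 < s\<close> in simp)
  then show ?thesis
    using norm_cauchy_schwarz[of u v] zw by (simp add: minkowski_def)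
qed

lemma cosh_hyp_dist: "z \<in> hyp_space \<Longrightarrow> w \<in> hyp_space \<Longrightarrow> cosh (hyp_dist z w) = minkowski z w"
  using one_le_minkowski_hyp_space[of z w] by (simp add: hyp_dist_def)

lemma hyp_dist_nonneg: "z \<in> hyp_space \<Longrightarrow> w \<in> hyp_space \<Longrightarrow> 0 \<le> hyp_dist z w"
  using one_le_minkowski_hyp_space[of z w] by (simp add: hyp_dist_def)

lemma hyp_dist_commute: "hyp_dist z w = hyp_dist w z"
  by (simp add: hyp_dist_def minkowski_commute)

lemma hyp_dist_le_iff:
  "\<lbrakk>x \<in> hyp_space; y \<in> hyp_space; z \<in> hyp_space\<rbrakk>
    \<Longrightarrow> hyp_dist x y \<le> hyp_dist x z \<longleftrightarrow> minkowski x y \<le> minkowski x z"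
  using one_le_minkowski_hyp_space[of x y] one_le_minkowski_hyp_space[of x z]
  by (simp add: hyp_dist_def flip: not_less)

lemma eq_0_if_minkowski_orthogonal:
  assumes "y \<in> hyp_space" "minkowski w y = 0" "0 \<le> minkowski w w"
  shows "w = 0"
proof -
  obtain t v \<sigma> u where yw: "y = (t, v)" "w = (\<sigma>, u)"
    by (cases y, cases w)
  with assms(1) have t: "t\<^sup>2 = 1 + (norm v)\<^sup>2"
    by (simp add: hyp_space_def)
  have "(norm u)\<^sup>2 \<le> \<sigma>\<^sup>2"
    using assms(3) yw by (simp add: minkowski_def power2_eq_square flip: power2_norm_eq_inner)
  have "(\<sigma> * t)\<^sup>2 = (inner u v)\<^sup>2"
    using assms(2) yw by (simp add: minkowski_def)
  also have "\<dots> \<le> (norm u * norm v)\<^sup>2"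
    using Cauchy_Schwarz_ineq2[of u v] by (metis abs_ge_zero power2_abs power_mono)
  also have "\<dots> \<le> \<sigma>\<^sup>2 * (norm v)\<^sup>2"
    using \<open>(norm u)\<^sup>2 \<le> \<sigma>\<^sup>2\<close> by (simp add: power_mult_distrib mult_right_mono)
  finally have "\<sigma> = 0"
    using t by (simp add: power_mult_distrib algebra_simps)
  with \<open>(norm u)\<^sup>2 \<le> \<sigma>\<^sup>2\<close> yw show ?thesis
    by (simp add: zero_prod_def)
qed

lemma hyp_dist_eq_0_iff: "z \<in> hyp_space \<Longrightarrow> w \<in> hyp_space \<Longrightarrow> hyp_dist z w = 0 \<longleftrightarrow> z = w"
proof
  assume zw: "z \<in> hyp_space" "w \<in> hyp_space" and "hyp_dist z w = 0"
  then have "minkowski z w = 1"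
    using one_le_minkowski_hyp_space[OF zw] by (simp add: hyp_dist_def)
  then have "minkowski (z - w) w = 0" "minkowski (z - w) (z - w) = 0"
    using minkowski_self_hyp_space[OF zw(1)] minkowski_self_hyp_space[OF zw(2)]
    by (simp_all add: minkowski_bilinear minkowski_commute[of w z])
  then show "z = w"
    using eq_0_if_minkowski_orthogonal[OF zw(2), of "z - w"] by simp
qed (simp add: hyp_dist_def minkowski_self_hyp_space)

lemma eq_hyperbolic_combination:
  assumes "y \<in> hyp_space" "minkowski e e = -1" "minkowski e y = 0"
    and "minkowski z y = c" "minkowski z e = - \<sigma>" "minkowski z z = c\<^sup>2 - \<sigma>\<^sup>2"
  shows "z = c *\<^sub>R y + \<sigma> *\<^sub>R e"
proof -
  define w where "w = z - (c *\<^sub>R y + \<sigma> *\<^sub>R e)"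
  have "minkowski w y = 0"
    using assms minkowski_self_hyp_space[OF assms(1)] by (simp add: w_def minkowski_bilinear)
  moreover have "minkowski w w = 0"
    using assms minkowski_self_hyp_space[OF assms(1)]
    by (simp add: w_def minkowski_bilinear minkowski_commute[of y z] minkowski_commute[of e z]
        minkowski_commute[of y e] power2_eq_square algebra_simps)
  ultimately have "w = 0"
    using eq_0_if_minkowski_orthogonal[OF assms(1)] by simp
  then show ?thesis
    by (simp add: w_def)
qed

text \<open>The initial unit tangent vector of the geodesic from \<open>y\<close> to \<open>p\<close>.\<close>

definition hyp_direction :: "real \<times> 'a::euclidean_space \<Rightarrow> real \<times> 'a \<Rightarrow> real \<times> 'a" where
  "hyp_direction y p = (1 / sinh (hyp_dist p y)) *\<^sub>R (p - cosh (hyp_dist p y) *\<^sub>R y)"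

lemma hyp_direction_orthonormal:
  assumes p: "p \<in> hyp_space" and y: "y \<in> hyp_space" and "0 < hyp_dist p y"
  shows "minkowski (hyp_direction y p) y = 0"
    "minkowski (hyp_direction y p) (hyp_direction y p) = -1"
proof -
  define a e where "a = hyp_dist p y" and "e = hyp_direction y p"
  have "sinh a > 0"
    using assms(3) by (simp add: a_def)
  have py: "minkowski p y = cosh a" and yy: "minkowski y y = 1" and pp: "minkowski p p = 1"
    using cosh_hyp_dist[OF p y] minkowski_self_hyp_space[OF y] minkowski_self_hyp_space[OF p]
    by (simp_all add: a_def)
  then show "minkowski (hyp_direction y p) y = 0"
    by (simp add: hyp_direction_def a_def[symmetric] minkowski_bilinear)
  have "minkowski e e
      = (1 / sinh a)\<^sup>2 * (minkowski p p - 2 * cosh a * minkowski p y + (cosh a)\<^sup>2 * minkowski y y)"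
    by (simp add: e_def hyp_direction_def a_def[symmetric] minkowski_bilinear
        minkowski_commute[of y p] power2_eq_square algebra_simps)
  also have "\<dots> = (1 / sinh a)\<^sup>2 * - (sinh a)\<^sup>2"
  proof -
    have "minkowski p p - 2 * cosh a * minkowski p y + (cosh a)\<^sup>2 * minkowski y y = - (sinh a)\<^sup>2"
      using pp py yy cosh_square_eq[of a] by (simp add: power2_eq_square)
    then show ?thesis
      by simp
  qed
  also have "\<dots> = -1"
    using \<open>sinh a > 0\<close> by (simp add: power2_eq_square)
  finally show "minkowski (hyp_direction y p) (hyp_direction y p) = -1"
    by (simp add: e_def)
qed

lemma hyp_direction_endpoint:
  assumes "0 < hyp_dist p y"
  shows "p = cosh (hyp_dist p y) *\<^sub>R y + sinh (hyp_dist p y) *\<^sub>R hyp_direction y p"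
  using assms by (simp add: hyp_direction_def)

lemma hyperbolic_geodesic_point_eq:
  assumes p: "p \<in> hyp_space" and y: "y \<in> hyp_space" and z: "z \<in> hyp_space"
    and "0 < hyp_dist p y" "hyp_dist y z = s" "hyp_dist p z = hyp_dist p y - s"
  shows "z = cosh s *\<^sub>R y + sinh s *\<^sub>R hyp_direction y p"
proof -
  define a where "a = hyp_dist p y"
  have "sinh a > 0"
    using assms(4) by (simp add: a_def)
  have zy: "minkowski z y = cosh s"
    using cosh_hyp_dist[OF y z] assms(5) by (simp add: minkowski_commute)
  have "minkowski z p = cosh a * cosh s - sinh a * sinh s"
    using cosh_hyp_dist[OF p z] assms(6) cosh_diff[of a s] by (simp add: a_def minkowski_commute)
  then have "minkowski z (hyp_direction y p) = - sinh s"
    using zy \<open>sinh a > 0\<close>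
    by (simp add: hyp_direction_def a_def[symmetric] minkowski_bilinear field_simps)
  with zy show ?thesis
    using hyp_direction_orthonormal[OF p y assms(4)] minkowski_self_hyp_space[OF z]
    by (intro eq_hyperbolic_combination[OF y]) (simp_all add: cosh_square_eq)
qed

lemma hyp_direction_opposite:
  fixes p q y :: "real \<times> 'a::euclidean_space"
  assumes seg: "shortest_segment hyp_dist hyp_space p q S"
    and "y \<in> S" "0 < hyp_dist p y" "0 < hyp_dist q y"
  shows "hyp_direction y q = - hyp_direction y p"
proof -
  define a b e e' where "a = hyp_dist p y" and "b = hyp_dist q y"
    and "e = hyp_direction y p" and "e' = hyp_direction y q"
  note mem = shortest_segment_mem[OF seg \<open>y \<in> S\<close>]
  have "a + b = hyp_dist p q"
    using shortest_segment_split[OF seg \<open>y \<in> S\<close>] by (simp add: a_def b_def hyp_dist_commute)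
  have ey: "minkowski e y = 0" and ee: "minkowski e e = -1"
    and e'y: "minkowski e' y = 0" and e'e': "minkowski e' e' = -1"
    using hyp_direction_orthonormal[OF mem(1,3) assms(3)]
      hyp_direction_orthonormal[OF mem(2,3) assms(4)]
    by (simp_all add: e_def e'_def)
  have pe: "p = cosh a *\<^sub>R y + sinh a *\<^sub>R e" and qe': "q = cosh b *\<^sub>R y + sinh b *\<^sub>R e'"
    using hyp_direction_endpoint[OF assms(3)] hyp_direction_endpoint[OF assms(4)]
    by (simp_all add: a_def b_def e_def e'_def)
  have "cosh a * cosh b + sinh a * sinh b = cosh (a + b)"
    by (simp add: cosh_add)
  also have "\<dots> = minkowski p q"
    using cosh_hyp_dist[OF mem(1,2)] \<open>a + b = hyp_dist p q\<close> by simp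
  also have "\<dots> = minkowski (cosh a *\<^sub>R y + sinh a *\<^sub>R e) (cosh b *\<^sub>R y + sinh b *\<^sub>R e')"
    using pe qe' by simp
  also have "\<dots> = cosh a * cosh b * minkowski y y + cosh a * sinh b * minkowski y e'
      + sinh a * cosh b * minkowski e y + sinh a * sinh b * minkowski e e'"
    by (simp add: minkowski_bilinear algebra_simps)
  also have "\<dots> = cosh a * cosh b + sinh a * sinh b * minkowski e e'"
    using minkowski_self_hyp_space[OF mem(3)] ey e'y by (simp add: minkowski_commute)
  finally have "sinh a * sinh b * minkowski e e' = sinh a * sinh b * 1"
    by simp
  moreover have "sinh a * sinh b \<noteq> 0"
    using assms(3,4) by (simp add: a_def b_def)
  ultimately have "minkowski e e' = 1"
    by (metis mult_left_cancel)
  then have "minkowski (e + e') y = 0" "minkowski (e + e') (e + e') = 0"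
    using ey e'y ee e'e' by (simp_all add: minkowski_bilinear minkowski_commute[of e' e])
  then have "e + e' = 0"
    using eq_0_if_minkowski_orthogonal[OF mem(3)] by simp
  then show ?thesis
    by (simp add: e_def e'_def add_eq_0_iff2)
qed

lemma hyperbolic_closest_point_tangent:
  fixes p q x y :: "real \<times> 'a::euclidean_space"
  assumes seg: "shortest_segment hyp_dist hyp_space p q S" and y: "closest_in hyp_dist S x y"
    and x: "x \<in> hyp_space" and "0 < hyp_dist p y"
  shows "0 \<le> minkowski x (hyp_direction y p)"
proof -
  define e where "e = hyp_direction y p"
  note mem = shortest_segment_mem[OF seg closest_in_mem[OF y]]
  define f where "f s = - (minkowski x y * cosh s + minkowski x e * sinh s)" for s
  have max: "f s \<le> f 0" if "0 < s" "s \<le> hyp_dist p y" for s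
  proof -
    from that have "0 \<le> s" "s \<le> hyp_dist p y"
      by simp_all
    then obtain z where z: "z \<in> S" "hyp_dist y z = s" "hyp_dist p z = hyp_dist p y - s"
      by (rule shortest_segment_interpolate[OF seg closest_in_mem[OF y]])
    then have "z \<in> hyp_space"
      using mem(4) by auto
    with z have "z = cosh s *\<^sub>R y + sinh s *\<^sub>R e"
      unfolding e_def using hyperbolic_geodesic_point_eq[OF mem(1,3)] assms(4) by blast
    moreover have "minkowski x y \<le> minkowski x z"
      using y z(1) hyp_dist_le_iff[OF x mem(3) \<open>z \<in> hyp_space\<close>] by (simp add: closest_in_def)
    ultimately show ?thesis
      by (simp add: f_def minkowski_bilinear mult.commute)
  qed
  have "DERIV f 0 :> - minkowski x e"
    unfolding f_def by (auto intro!: derivative_eq_intros)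
  then have "- minkowski x e \<le> 0"
    using assms(4) max by (rule deriv_nonpos_if_max_on_right)
  then show ?thesis
    by (simp add: e_def)
qed

lemma hyperbolic_closest_point_orthogonal:
  fixes p q x y :: "real \<times> 'a::euclidean_space"
  assumes seg: "shortest_segment hyp_dist hyp_space p q S" and y: "closest_in hyp_dist S x y"
    and x: "x \<in> hyp_space" and "0 < hyp_dist p y" "0 < hyp_dist q y"
  shows "minkowski x (hyp_direction y p) = 0"
proof -
  have "0 \<le> minkowski x (hyp_direction y p)" "0 \<le> minkowski x (hyp_direction y q)"
    using hyperbolic_closest_point_tangent[OF seg y x assms(4)]
      hyperbolic_closest_point_tangent[OF shortest_segment_reverse[OF seg] y x assms(5)]
    by simp_all
  with hyp_direction_opposite[OF seg closest_in_mem[OF y] assms(4,5)] show ?thesis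
    by (simp add: minkowski_bilinear)
qed

lemma hyperbolic_closest_point_pythagoras:
  fixes p q x y :: "real \<times> 'a::euclidean_space"
  assumes seg: "shortest_segment hyp_dist hyp_space p q S" and y: "closest_in hyp_dist S x y"
    and x: "x \<in> hyp_space" and "0 < hyp_dist p y" "0 < hyp_dist q y"
  shows "cosh (hyp_dist p x) = cosh (hyp_dist p y) * cosh (hyp_dist x y)"
proof -
  define a e where "a = hyp_dist p y" and "e = hyp_direction y p"
  note mem = shortest_segment_mem[OF seg closest_in_mem[OF y]]
  have "p = cosh a *\<^sub>R y + sinh a *\<^sub>R e"
    using hyp_direction_endpoint[OF assms(4)] by (simp add: a_def e_def)
  moreover have "minkowski x e = 0"
    using hyperbolic_closest_point_orthogonal[OF assms] by (simp add: e_def)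
  ultimately have "minkowski p x = cosh a * minkowski y x"
    by (simp add: minkowski_bilinear minkowski_commute[of e x])
  then show ?thesis
    using cosh_hyp_dist[OF mem(1) x] cosh_hyp_dist[OF mem(3) x] by (simp add: a_def hyp_dist_commute)
qed

lemma hyperbolic_detour_le:
  fixes p q x y :: "real \<times> 'a::euclidean_space"
  assumes seg: "shortest_segment hyp_dist hyp_space p q S" and y: "closest_in hyp_dist S x y"
    and x: "x \<in> hyp_space" and "0 \<le> \<epsilon>" "\<epsilon> \<le> 1" and "hyp_dist p q \<le> \<Delta>"
    and near: "hyp_dist x y \<le> sqrt \<epsilon> * min (hyp_dist p y) (hyp_dist q y)"
  shows "hyp_dist p x + hyp_dist x q \<le> (1 + exp \<Delta> * \<epsilon>) * hyp_dist p q"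
proof (rule detour_le_if_sides_le[OF seg y x hyp_dist_commute _ _ \<open>0 \<le> \<epsilon>\<close> near])
  note mem = shortest_segment_mem[OF seg closest_in_mem[OF y]]
  have "hyp_dist p y + hyp_dist q y = hyp_dist p q"
    using shortest_segment_split[OF seg closest_in_mem[OF y]] by (simp add: hyp_dist_commute)
  then have "hyp_dist p y \<le> \<Delta>" "hyp_dist q y \<le> \<Delta>"
    using hyp_dist_nonneg[OF mem(1,3)] hyp_dist_nonneg[OF mem(2,3)] \<open>hyp_dist p q \<le> \<Delta>\<close>
    by linarith+
  assume "0 < hyp_dist p y" "0 < hyp_dist q y"
    "(hyp_dist x y)\<^sup>2 \<le> \<epsilon> * (hyp_dist p y)\<^sup>2" "(hyp_dist x y)\<^sup>2 \<le> \<epsilon> * (hyp_dist q y)\<^sup>2"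
  with \<open>hyp_dist p y \<le> \<Delta>\<close> \<open>hyp_dist q y \<le> \<Delta>\<close>
  show "hyp_dist p x \<le> (1 + exp \<Delta> * \<epsilon>) * hyp_dist p y
      \<and> hyp_dist q x \<le> (1 + exp \<Delta> * \<epsilon>) * hyp_dist q y"
    using hyperbolic_closest_point_pythagoras[OF seg y x]
      hyperbolic_closest_point_pythagoras[OF shortest_segment_reverse[OF seg] y x]
      hyp_dist_nonneg[OF mem(1) x] hyp_dist_nonneg[OF mem(2) x] hyp_dist_nonneg[OF x mem(3)]
      assms(4,5)
    by (auto intro: hyperbolic_hypotenuse_le)
qed (simp_all add: hyp_dist_nonneg hyp_dist_eq_0_iff assms(4))

theorem mainTheorem4:
  fixes \<epsilon> :: real
  assumes dim: "DIM('a::euclidean_space) \<ge> 2"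
    and eps: "0 < \<epsilon>" "\<epsilon> \<le> 1"
  shows
    "(\<forall>(p::'a) q x S y.
        shortest_segment dist UNIV p q S \<and> closest_in dist S x y \<and>
        dist x y \<le> sqrt \<epsilon> * min (dist p y) (dist q y)
        \<longrightarrow> dist p x + dist x q \<le> (1 + \<epsilon>) * dist p q)
   \<and> (\<forall>(p::real \<times> 'a) q x S y.
        p \<in> sph_space \<and> q \<in> sph_space \<and> x \<in> sph_space \<and>
        shortest_segment sph_dist sph_space p q S \<and> closest_in sph_dist S x y \<and>
        sph_dist x y \<le> sqrt \<epsilon> * min (sph_dist p y) (sph_dist q y)
        \<longrightarrow> sph_dist p x + sph_dist x q \<le> (1 + \<epsilon>) * sph_dist p q)
   \<and> (\<forall>(p::real \<times> 'a) q x S y \<Delta>.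
        p \<in> hyp_space \<and> q \<in> hyp_space \<and> x \<in> hyp_space \<and>
        shortest_segment hyp_dist hyp_space p q S \<and> closest_in hyp_dist S x y \<and>
        \<Delta> > 0 \<and> hyp_dist p q \<le> \<Delta> \<and>
        hyp_dist x y \<le> sqrt \<epsilon> * min (hyp_dist p y) (hyp_dist q y)
        \<longrightarrow> hyp_dist p x + hyp_dist x q \<le> (1 + exp \<Delta> * \<epsilon>) * hyp_dist p q)"
proof -
  have "0 \<le> \<epsilon>"
    using eps(1) by simp
  with eps(2) show ?thesis
    using euclidean_detour_le[where \<epsilon> = \<epsilon>] sphere_detour_le[where \<epsilon> = \<epsilon>]
      hyperbolic_detour_le[where \<epsilon> = \<epsilon>]
    by blast
qed

end
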